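(* Let $B\colon\mathbf{Set}\to\mathbf{Set}$ be a functor, $\Lambda$ a set and $(\tau_\lambda\colon B\mathbb{R}\to\mathbb{R})_{\lambda\in\Lambda}$ functions such that, for every set $Y$: (1) if $k\colon Y\to\mathbb{R}$ is bounded then $\tau_\lambda\circ Bk$ is bounded; (2) if $k_i\colon Y\to\mathbb{R}$ converges uniformly to $h$ then $\tau_\lambda\circ Bk_i$ converges uniformly to $\tau_\lambda\circ Bh$, for each $\lambda$. Then for every coalgebra $x\colon X\to BX$, the bisimulation uniformity of $x$ coincides with the logical uniformity of $x$, i.e. it is the coarsest uniformity on $X$ making every $[\![\varphi]\!]_x\colon X\to\mathbb{R}$ uniformly continuous.
   Context: For a family $F$ of functions $Y\to\mathbb{R}$, $\mathscr{U}(F)$ is the coarsest uniformity on $Y$ making each $f\in F$ uniformly continuous into $(\mathbb{R},\mathscr{U}_e)$, $\mathscr{U}_e$ the Euclidean uniformity. Formulas: $\varphi::=1\mid\min(\varphi_1,\varphi_2)\mid r+\varphi\mid r\times\varphi\ (r\in\mathbb{R})\mid\heartsuit_\lambda\varphi$; semantics $[\![1]\!]=1$, $\min$ pointwise, $[\![r+\varphi]\!]=r+[\![\varphi]\!]$, $[\![r\times\varphi]\!]=r[\![\varphi]\!]$, $[\![\heartsuit_\lambda\varphi]\!]_x=\tau_\lambda\circ B[\![\varphi]\!]_x\circ x$. Logical uniformity: $\mathscr{U}(\{[\![\varphi]\!]_x\})$. For a uniformity $\mathscr{U}$ on $X$, $\Phi(\mathscr{U})=\mathscr{U}(\{\tau_\lambda\circ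 Bh\circ x\mid\lambda,\ h\colon(X,\mathscr{U})\to(\mathbb{R},\mathscr{U}_e)$ uniformly continuous$\})$; uniformities are ordered by $\mathscr{U}\sqsubseteq\mathscr{V}$ iff $\mathscr{U}\supseteq\mathscr{V}$, and the bisimulation uniformity is the $\sqsubseteq$-greatest fixed point of $\Phi$. *)

theory Defs
  imports "HOL-Analysis.Analysis"
begin

definition is_uniformity :: "('a \<times> 'a) set set \<Rightarrow> bool" where
  "is_uniformity U \<longleftrightarrow>
     UNIV \<in> U \<and>
     (\<forall>E\<in>U. \<forall>F. E \<subseteq> F \<longrightarrow> F \<in> U) \<and>
     (\<forall>E\<in>U. \<forall>F\<in>U. E \<inter> F \<in> U) \<and>
     (\<forall>E\<in>U. Id \<subseteq> E) \<and>
     (\<forall>E\<in>U. E\<inverse> \<in> U) \<and>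
     (\<forall>E\<in>U. \<exists>D\<in>U. D O D \<subseteq> E)"

definition eucl_unif :: "(real \<times> real) set set" where
  "eucl_unif = {E. \<exists>\<epsilon>>0. {(r, s). dist r s < \<epsilon>} \<subseteq> E}"

definition unif_cont :: "('a \<times> 'a) set set \<Rightarrow> ('b \<times> 'b) set set \<Rightarrow> ('a \<Rightarrow> 'b) \<Rightarrow> bool" where
  "unif_cont U V f \<longleftrightarrow> (\<forall>E\<in>V. {(a, b). (f a, f b) \<in> E} \<in> U)"

definition initial_unif :: "('a \<Rightarrow> real) set \<Rightarrow> ('a \<times> 'a) set set" where
  "initial_unif F = (THE U. is_uniformity U \<and> (\<forall>f\<in>F. unif_cont U eucl_unif f) \<and>
      (\<forall>V. is_uniformity V \<and> (\<forall>f\<in>F. unif_cont V eucl_unif f) \<longrightarrow> U \<subseteq> V))"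

datatype 'l frm = FOne | FMin "'l frm" "'l frm" | FPlus real "'l frm"
  | FTimes real "'l frm" | FHeart 'l "'l frm"

text \<open>\<open>\<tau>\<close>: the family of evaluation maps \<open>B\<real> \<rightarrow> \<real>\<close> indexed by \<open>\<Lambda>\<close> (the type 'l);
  \<open>Bm\<close>: the action of the functor B on maps \<open>X \<rightarrow> \<real>\<close>; \<open>x\<close>: the coalgebra \<open>X \<rightarrow> BX\<close>.\<close>
fun sem :: "('l \<Rightarrow> 'br \<Rightarrow> real) \<Rightarrow> (('x \<Rightarrow> real) \<Rightarrow> 'bx \<Rightarrow> 'br) \<Rightarrow> ('x \<Rightarrow> 'bx)
            \<Rightarrow> 'l frm \<Rightarrow> 'x \<Rightarrow> real" where
  "sem \<tau> Bm x FOne = (\<lambda>_. 1)"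
| "sem \<tau> Bm x (FMin a b) = (\<lambda>y. min (sem \<tau> Bm x a y) (sem \<tau> Bm x b y))"
| "sem \<tau> Bm x (FPlus r a) = (\<lambda>y. r + sem \<tau> Bm x a y)"
| "sem \<tau> Bm x (FTimes r a) = (\<lambda>y. r * sem \<tau> Bm x a y)"
| "sem \<tau> Bm x (FHeart l a) = \<tau> l \<circ> Bm (sem \<tau> Bm x a) \<circ> x"

definition logical_unif :: "('l \<Rightarrow> 'br \<Rightarrow> real) \<Rightarrow> (('x \<Rightarrow> real) \<Rightarrow> 'bx \<Rightarrow> 'br) \<Rightarrow> ('x \<Rightarrow> 'bx)
            \<Rightarrow> ('x \<times> 'x) set set" where
  "logical_unif \<tau> Bm x = initial_unif (range (sem \<tau> Bm x))"

definition Phi :: "('l \<Rightarrow> 'br \<Rightarrow> real) \<Rightarrow> (('x \<Rightarrow> real) \<Rightarrow> 'bx \<Rightarrow> 'br) \<Rightarrow> ('x \<Rightarrow> 'bx)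
            \<Rightarrow> ('x \<times> 'x) set set \<Rightarrow> ('x \<times> 'x) set set" where
  "Phi \<tau> Bm x U = initial_unif {\<tau> l \<circ> Bm h \<circ> x | l h. unif_cont U eucl_unif h}"

text \<open>Greatest fixed point w.r.t. \<open>U \<sqsubseteq> V \<longleftrightarrow> U \<supseteq> V\<close>, i.e. the fixed point (among
  uniformities) contained in every other fixed point.\<close>
definition bisim_unif :: "('l \<Rightarrow> 'br \<Rightarrow> real) \<Rightarrow> (('x \<Rightarrow> real) \<Rightarrow> 'bx \<Rightarrow> 'br) \<Rightarrow> ('x \<Rightarrow> 'bx)
            \<Rightarrow> ('x \<times> 'x) set set" where
  "bisim_unif \<tau> Bm x = (THE U. is_uniformity U \<and> Phi \<tau> Bm x U = U \<and>
      (\<forall>V. is_uniformity V \<and> Phi \<tau> Bm x V = V \<longrightarrow> U \<subseteq> V))"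

end

theory Submission
  imports Defs
begin

text \<open>The logical uniformity \<open>L\<close>, generated by the semantics of all formulas, is the
  \<open>\<sqsubseteq>\<close>-greatest fixed point of the monotone operator \<open>\<Phi>\<close>. By induction on formulas every
  \<open>\<lbrakk>\<phi>\<rbrakk>\<close> is \<open>V\<close>-uniformly continuous for each uniformity \<open>V\<close> with \<open>\<Phi>(V) \<subseteq> V\<close>, the
  \<open>\<heartsuit>\<close>-step being exactly that inclusion; so \<open>L\<close> lies inside every fixed point, and once
  \<open>\<Phi>(L) \<subseteq> L\<close> is known, also \<open>L \<subseteq> \<Phi>(L)\<close> by monotonicity. For \<open>\<Phi>(L) \<subseteq> L\<close>: the semantics form
  a lattice of functions that contains the constants, is closed under translation and scaling,
  and is bounded by condition (1). A Kakutani-type lattice argument makes every \<open>L\<close>-uniformly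
  continuous \<open>h\<close> a uniform limit of functions \<open>\<lbrakk>\<phi>\<^sub>n\<rbrakk>\<close>, and then by condition (2)
  \<open>\<tau>\<^sub>\<lambda> \<circ> Bh \<circ> x\<close> is the uniform limit of the \<open>L\<close>-uniformly continuous \<open>\<lbrakk>\<heartsuit>\<^sub>\<lambda>\<phi>\<^sub>n\<rbrakk>\<close>.\<close>

lemma uniformity_UNIV: "is_uniformity U \<Longrightarrow> UNIV \<in> U"
  unfolding is_uniformity_def by blast

lemma uniformity_mono: "is_uniformity U \<Longrightarrow> E \<in> U \<Longrightarrow> E \<subseteq> F \<Longrightarrow> F \<in> U"
  unfolding is_uniformity_def by blast

lemma uniformity_Int: "is_uniformity U \<Longrightarrow> E \<in> U \<Longrightarrow> F \<in> U \<Longrightarrow> E \<inter> F \<in> U"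
  unfolding is_uniformity_def by blast

lemma uniformity_INT_finite:
  assumes "is_uniformity U" "finite I" "\<And>i. i \<in> I \<Longrightarrow> E i \<in> U"
  shows "(\<Inter>i\<in>I. E i) \<in> U"
  using assms(2,3)
  by (induction I rule: finite_induct) (auto intro: uniformity_UNIV uniformity_Int assms(1))

lemma unif_cont_eucl_iff:
  assumes "is_uniformity U"
  shows "unif_cont U eucl_unif f \<longleftrightarrow> (\<forall>e>0. {(a, b). \<bar>f a - f b\<bar> < e} \<in> U)"
proof
  assume f: "unif_cont U eucl_unif f"
  show "\<forall>e>0. {(a, b). \<bar>f a - f b\<bar> < e} \<in> U"
  proof (intro allI impI)
    fix e :: real assume "e > 0"
    then have "{(r, s). dist r s < e} \<in> eucl_unif"
      unfolding eucl_unif_def by blast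
    with f have "{(a, b). (f a, f b) \<in> {(r, s). dist r s < e}} \<in> U"
      unfolding unif_cont_def by blast
    then show "{(a, b). \<bar>f a - f b\<bar> < e} \<in> U"
      by (simp add: dist_real_def)
  qed
next
  assume f: "\<forall>e>0. {(a, b). \<bar>f a - f b\<bar> < e} \<in> U"
  show "unif_cont U eucl_unif f"
    unfolding unif_cont_def
  proof
    fix E assume "E \<in> eucl_unif"
    then obtain e where "e > 0" "{(r, s). dist r s < e} \<subseteq> E"
      unfolding eucl_unif_def by blast
    then have "{(a, b). \<bar>f a - f b\<bar> < e} \<subseteq> {(a, b). (f a, f b) \<in> E}"
      by (auto simp: dist_real_def)
    with f \<open>e > 0\<close> show "{(a, b). (f a, f b) \<in> E} \<in> U"
      by (blast intro: uniformity_mono assms)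
  qed
qed

lemma unif_cont_uniform_limit:
  assumes U: "is_uniformity U" and g: "\<And>n. unif_cont U eucl_unif (g n)"
    and lim: "uniform_limit UNIV g h sequentially"
  shows "unif_cont U eucl_unif h"
  unfolding unif_cont_eucl_iff[OF U]
proof (intro allI impI)
  fix e :: real assume "e > 0"
  then obtain n where n: "\<And>y. \<bar>g n y - h y\<bar> < e / 3"
    using uniform_limitD[OF lim, of "e / 3"] by (auto simp: dist_real_def eventually_sequentially)
  have "{(a, b). \<bar>g n a - g n b\<bar> < e / 3} \<in> U"
    using g[of n] \<open>e > 0\<close> unfolding unif_cont_eucl_iff[OF U] by (meson divide_pos_pos zero_less_numeral)
  moreover have "{(a, b). \<bar>g n a - g n b\<bar> < e / 3} \<subseteq> {(a, b). \<bar>h a - h b\<bar> < e}"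
  proof clarify
    fix a b assume "\<bar>g n a - g n b\<bar> < e / 3"
    with n[of a] n[of b] show "\<bar>h a - h b\<bar> < e"
      by arith
  qed
  ultimately show "{(a, b). \<bar>h a - h b\<bar> < e} \<in> U"
    by (rule uniformity_mono[OF U])
qed

section \<open>The uniformity generated by a family of real functions\<close>

definition gen_unif :: "('a \<Rightarrow> real) set \<Rightarrow> ('a \<times> 'a) set set" where
  "gen_unif F = {E. \<exists>G \<delta>. finite G \<and> G \<subseteq> F \<and> \<delta> > 0 \<and>
                         {(a, b). \<forall>f\<in>G. \<bar>f a - f b\<bar> < \<delta>} \<subseteq> E}"

lemma is_uniformity_gen_unif: "is_uniformity (gen_unif F)"
  unfolding is_uniformity_def
proof (intro conjI ballI allI impI)
  show "UNIV \<in> gen_unif F"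
    unfolding gen_unif_def by (intro CollectI exI[of _ "{}"] exI[of _ 1]) auto
next
  fix E E' assume "E \<in> gen_unif F" "E \<subseteq> E'"
  then show "E' \<in> gen_unif F"
    unfolding gen_unif_def by blast
next
  fix E E' assume "E \<in> gen_unif F" "E' \<in> gen_unif F"
  then obtain G \<delta> G' \<delta>' where
    "finite G" "G \<subseteq> F" "\<delta> > 0" "{(a, b). \<forall>f\<in>G. \<bar>f a - f b\<bar> < \<delta>} \<subseteq> E"
    "finite G'" "G' \<subseteq> F" "\<delta>' > 0" "{(a, b). \<forall>f\<in>G'. \<bar>f a - f b\<bar> < \<delta>'} \<subseteq> E'"
    unfolding gen_unif_def by blast
  then show "E \<inter> E' \<in> gen_unif F"
    unfolding gen_unif_def by (intro CollectI exI[of _ "G \<union> G'"] exI[of _ "min \<delta> \<delta>'"]) fastforce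
next
  fix E assume "E \<in> gen_unif F"
  then show "Id \<subseteq> E"
    unfolding gen_unif_def by fastforce
next
  fix E assume "E \<in> gen_unif F"
  then show "E\<inverse> \<in> gen_unif F"
    unfolding gen_unif_def by (fastforce simp: abs_minus_commute)
next
  fix E assume "E \<in> gen_unif F"
  then obtain G \<delta> where G: "finite G" "G \<subseteq> F" "\<delta> > 0"
    and E: "{(a, b). \<forall>f\<in>G. \<bar>f a - f b\<bar> < \<delta>} \<subseteq> E"
    unfolding gen_unif_def by blast
  define D where "D = {(a, b). \<forall>f\<in>G. \<bar>f a - f b\<bar> < \<delta> / 2}"
  have "D \<in> gen_unif F"
    unfolding gen_unif_def D_def using G by (intro CollectI exI[of _ G] exI[of _ "\<delta> / 2"]) auto
  moreover have "D O D \<subseteq> E"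
  proof
    fix p assume "p \<in> D O D"
    then obtain a b c where "p = (a, c)" "(a, b) \<in> D" "(b, c) \<in> D"
      by blast
    have "\<bar>f a - f c\<bar> < \<delta>" if "f \<in> G" for f
    proof -
      have "\<bar>f a - f b\<bar> < \<delta> / 2" "\<bar>f b - f c\<bar> < \<delta> / 2"
        using \<open>(a, b) \<in> D\<close> \<open>(b, c) \<in> D\<close> \<open>f \<in> G\<close> unfolding D_def by auto
      then show ?thesis
        by arith
    qed
    with E \<open>p = (a, c)\<close> show "p \<in> E"
      by blast
  qed
  ultimately show "\<exists>D\<in>gen_unif F. D O D \<subseteq> E"
    by blast
qed

lemma unif_cont_gen_unif: "f \<in> F \<Longrightarrow> unif_cont (gen_unif F) eucl_unif f"
  unfolding unif_cont_eucl_iff[OF is_uniformity_gen_unif]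
  by (auto simp: gen_unif_def intro!: exI[of _ "{f}"])

lemma gen_unif_least:
  assumes U: "is_uniformity U" and F: "\<And>f. f \<in> F \<Longrightarrow> unif_cont U eucl_unif f"
  shows "gen_unif F \<subseteq> U"
proof
  fix E assume "E \<in> gen_unif F"
  then obtain G \<delta> where "finite G" "G \<subseteq> F" "\<delta> > 0"
    and E: "{(a, b). \<forall>f\<in>G. \<bar>f a - f b\<bar> < \<delta>} \<subseteq> E"
    unfolding gen_unif_def by blast
  then have "(\<Inter>f\<in>G. {(a, b). \<bar>f a - f b\<bar> < \<delta>}) \<in> U"
    using F unfolding unif_cont_eucl_iff[OF U] by (blast intro: uniformity_INT_finite[OF U])
  moreover have "(\<Inter>f\<in>G. {(a, b). \<bar>f a - f b\<bar> < \<delta>}) \<subseteq> E"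
    using E by auto
  ultimately show "E \<in> U"
    by (rule uniformity_mono[OF U])
qed

lemma initial_unif_eq_gen_unif: "initial_unif F = gen_unif F"
  unfolding initial_unif_def
proof (rule the_equality)
  show "is_uniformity (gen_unif F) \<and> (\<forall>f\<in>F. unif_cont (gen_unif F) eucl_unif f) \<and>
    (\<forall>V. is_uniformity V \<and> (\<forall>f\<in>F. unif_cont V eucl_unif f) \<longrightarrow> gen_unif F \<subseteq> V)"
    by (simp add: is_uniformity_gen_unif unif_cont_gen_unif gen_unif_least)
next
  fix U assume "is_uniformity U \<and> (\<forall>f\<in>F. unif_cont U eucl_unif f) \<and>
    (\<forall>V. is_uniformity V \<and> (\<forall>f\<in>F. unif_cont V eucl_unif f) \<longrightarrow> U \<subseteq> V)"
  then show "U = gen_unif F"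
    by (simp add: is_uniformity_gen_unif unif_cont_gen_unif gen_unif_least subset_antisym)
qed

lemma unif_cont_gen_unifD:
  assumes "unif_cont (gen_unif F) eucl_unif h" "e > 0"
  obtains G \<delta> where "finite G" "G \<subseteq> F" "\<delta> > 0"
    "\<And>a b. \<forall>f\<in>G. \<bar>f a - f b\<bar> < \<delta> \<Longrightarrow> \<bar>h a - h b\<bar> < e"
proof -
  have "{(a, b). \<bar>h a - h b\<bar> < e} \<in> gen_unif F"
    using assms unfolding unif_cont_eucl_iff[OF is_uniformity_gen_unif] by blast
  then show thesis
    unfolding gen_unif_def using that by blast
qed

lemma abs_diff_less_if_floor_divide_eq:
  fixes a b \<delta> :: real
  assumes "\<delta> > 0" "\<lfloor>a / \<delta>\<rfloor> = \<lfloor>b / \<delta>\<rfloor>"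
  shows "\<bar>a - b\<bar> < \<delta>"
proof -
  have "\<bar>a / \<delta> - b / \<delta>\<bar> < 1"
    using assms(2) by linarith
  then show ?thesis
    using assms(1) by (simp add: diff_divide_distrib[symmetric] abs_divide)
qed

lemma finite_cover_bounded:
  fixes G :: "('a \<Rightarrow> real) set"
  assumes "finite G" and bdd: "\<And>f. f \<in> G \<Longrightarrow> bounded (range f)" and "\<delta> > 0"
  obtains R where "finite R" "\<And>y. \<exists>r\<in>R. \<forall>f\<in>G. \<bar>f y - f r\<bar> < \<delta>"
proof -
  obtain N where N: "\<And>f y. f \<in> G \<Longrightarrow> \<bar>f y\<bar> \<le> N f"
  proof -
    have "\<forall>f\<in>G. \<exists>N. \<forall>y. \<bar>f y\<bar> \<le> N"
      using bdd by (auto simp: bounded_real)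
    then show thesis
      using that by metis
  qed
  define \<kappa> where "\<kappa> y = restrict (\<lambda>f. \<lfloor>f y / \<delta>\<rfloor>) G" for y
  have "\<lfloor>f y / \<delta>\<rfloor> \<in> {\<lfloor>- N f / \<delta>\<rfloor>..\<lfloor>N f / \<delta>\<rfloor>}" if "f \<in> G" for f y
    using N[OF that, of y] \<open>\<delta> > 0\<close> by (auto simp: abs_le_iff field_simps intro!: floor_mono)
  then have "range \<kappa> \<subseteq> PiE G (\<lambda>f. {\<lfloor>- N f / \<delta>\<rfloor>..\<lfloor>N f / \<delta>\<rfloor>})"
    by (auto simp: \<kappa>_def)
  then have "finite (range \<kappa>)"
    by (rule finite_subset) (simp add: finite_PiE \<open>finite G\<close>)
  show thesis
  proof (rule that[of "inv \<kappa> ` range \<kappa>"])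
    show "finite (inv \<kappa> ` range \<kappa>)"
      using \<open>finite (range \<kappa>)\<close> by simp
  next
    fix y
    have "\<kappa> (inv \<kappa> (\<kappa> y)) = \<kappa> y"
      by (simp add: f_inv_into_f)
    then have "\<bar>f y - f (inv \<kappa> (\<kappa> y))\<bar> < \<delta>" if "f \<in> G" for f
      using that \<open>\<delta> > 0\<close> by (intro abs_diff_less_if_floor_divide_eq) (auto simp: \<kappa>_def dest: fun_cong[of _ _ f])
    then show "\<exists>r\<in>inv \<kappa> ` range \<kappa>. \<forall>f\<in>G. \<bar>f y - f r\<bar> < \<delta>"
      by blast
  qed
qed

lemma bounded_if_unif_cont_gen_unif:
  assumes bdd: "\<And>f. f \<in> F \<Longrightarrow> bounded (range f)" and h: "unif_cont (gen_unif F) eucl_unif h"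
  obtains H where "\<And>y. \<bar>h y\<bar> \<le> H"
proof -
  obtain G \<delta> where G: "finite G" "G \<subseteq> F" "\<delta> > 0"
    and close: "\<And>a b. \<forall>f\<in>G. \<bar>f a - f b\<bar> < \<delta> \<Longrightarrow> \<bar>h a - h b\<bar> < 1"
    using unif_cont_gen_unifD[OF h, of 1] by auto
  obtain R where "finite R" and R: "\<And>y. \<exists>r\<in>R. \<forall>f\<in>G. \<bar>f y - f r\<bar> < \<delta>"
    using finite_cover_bounded[OF G(1) _ G(3)] bdd G(2) by blast
  have "\<bar>h y\<bar> \<le> (\<Sum>r\<in>R. \<bar>h r\<bar>) + 1" for y
  proof -
    obtain r where "r \<in> R" "\<forall>f\<in>G. \<bar>f y - f r\<bar> < \<delta>"
      using R by blast
    then have "\<bar>h y - h r\<bar> < 1" "\<bar>h r\<bar> \<le> (\<Sum>r\<in>R. \<bar>h r\<bar>)"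
      using close \<open>finite R\<close> by (auto intro: member_le_sum)
    then show ?thesis
      by arith
  qed
  then show thesis
    by (rule that)
qed

section \<open>Uniform approximation in lattices of functions\<close>

locale function_lattice =
  fixes A :: "('a \<Rightarrow> real) set"
  assumes const_in: "(\<lambda>_. c) \<in> A"
    and min_in: "f \<in> A \<Longrightarrow> g \<in> A \<Longrightarrow> (\<lambda>y. min (f y) (g y)) \<in> A"
    and plus_in: "f \<in> A \<Longrightarrow> (\<lambda>y. c + f y) \<in> A"
    and scale_in: "f \<in> A \<Longrightarrow> (\<lambda>y. c * f y) \<in> A"
begin

lemma max_in:
  assumes "f \<in> A" "g \<in> A"
  shows "(\<lambda>y. max (f y) (g y)) \<in> A"
proof -
  have "(\<lambda>y. - 1 * min (- 1 * f y) (- 1 * g y)) \<in> A"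
    using assms by (intro scale_in min_in)
  moreover have "(\<lambda>y. - 1 * min (- 1 * f y) (- 1 * g y)) = (\<lambda>y. max (f y) (g y))"
    by (auto simp: min_def max_def)
  ultimately show ?thesis
    by simp
qed

lemma abs_diff_in:
  assumes "f \<in> A"
  shows "(\<lambda>y. \<bar>f y - c\<bar>) \<in> A"
proof -
  have "(\<lambda>y. max (- c + f y) (c + - 1 * f y)) \<in> A"
    using assms by (intro max_in plus_in scale_in)
  moreover have "(\<lambda>y. max (- c + f y) (c + - 1 * f y)) = (\<lambda>y. \<bar>f y - c\<bar>)"
    by (auto simp: max_def)
  ultimately show ?thesis
    by simp
qed

lemma Max_in:
  assumes "finite S" "S \<noteq> {}" "S \<subseteq> A"
  shows "(\<lambda>y. Max ((\<lambda>f. f y) ` S)) \<in> A"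
  using assms by (induction S rule: finite_ne_induct) (simp_all add: max_in)

lemma sup_distance_in:
  assumes "finite G" "G \<subseteq> A"
  obtains d where "d \<in> A" "\<And>y. 0 \<le> d y" "\<And>y t. d y < t \<longleftrightarrow> 0 < t \<and> (\<forall>f\<in>G. \<bar>f y - f a\<bar> < t)"
proof
  let ?d = "\<lambda>y. Max ((\<lambda>f. f y) ` insert (\<lambda>_. 0) ((\<lambda>f y. \<bar>f y - f a\<bar>) ` G))"
  show "?d \<in> A"
    using assms by (intro Max_in) (auto intro: const_in abs_diff_in)
  show "0 \<le> ?d y" "?d y < t \<longleftrightarrow> 0 < t \<and> (\<forall>f\<in>G. \<bar>f y - f a\<bar> < t)" for y t
    using assms(1) by (simp_all add: image_image)
qed

lemma lower_bump:
  assumes h: "\<And>y. \<bar>h y\<bar> \<le> H" and G: "finite G" "G \<subseteq> A" and "\<epsilon> > 0"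
    and close: "\<And>a b. \<forall>f\<in>G. \<bar>f a - f b\<bar> < \<delta> \<Longrightarrow> \<bar>h a - h b\<bar> < \<epsilon>"
    and "M \<ge> 0" "2 * H \<le> M * \<delta>"
  obtains g where "g \<in> A" "\<And>y. g y \<le> h y"
    "\<And>y t. 0 < t \<Longrightarrow> t \<le> \<delta> \<Longrightarrow> \<forall>f\<in>G. \<bar>f y - f a\<bar> < t \<Longrightarrow> h y - 2 * \<epsilon> - M * t < g y"
proof -
  obtain d where "d \<in> A" "\<And>y. 0 \<le> d y"
    and d_less: "\<And>y t. d y < t \<longleftrightarrow> 0 < t \<and> (\<forall>f\<in>G. \<bar>f y - f a\<bar> < t)"
    using sup_distance_in[OF G] by blast
  define g where "g y = (h a - \<epsilon>) + - M * d y" for y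
  \<comment> \<open>Where \<open>d y < \<delta>\<close>, \<open>g y \<le> h a - \<epsilon> < h y\<close>; elsewhere the slope \<open>M\<close> pushes \<open>g\<close> below \<open>-H\<close>.\<close>
  have "g \<in> A"
    unfolding g_def using \<open>d \<in> A\<close> by (intro plus_in scale_in)
  moreover have "g y \<le> h y" for y
  proof (cases "d y < \<delta>")
    case True
    then have "\<bar>h y - h a\<bar> < \<epsilon>"
      using close d_less by blast
    moreover have "0 \<le> M * d y"
      using \<open>M \<ge> 0\<close> \<open>0 \<le> d y\<close> by simp
    ultimately show ?thesis
      unfolding g_def by arith
  next
    case False
    then have "M * \<delta> \<le> M * d y"
      using \<open>M \<ge> 0\<close> by (simp add: mult_left_mono)
    then show ?thesis
      using h[of a] h[of y] \<open>2 * H \<le> M * \<delta>\<close> \<open>\<epsilon> > 0\<close> unfolding g_def by arith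
  qed
  moreover have "h y - 2 * \<epsilon> - M * t < g y"
    if "0 < t" "t \<le> \<delta>" "\<forall>f\<in>G. \<bar>f y - f a\<bar> < t" for y t
  proof -
    have "d y < t"
      using that d_less by blast
    then have "M * d y \<le> M * t"
      using \<open>M \<ge> 0\<close> by (simp add: mult_left_mono)
    moreover have "\<bar>h y - h a\<bar> < \<epsilon>"
      using that by (intro close) (auto intro: less_le_trans)
    ultimately show ?thesis
      unfolding g_def by arith
  qed
  ultimately show thesis
    by (rule that)
qed

lemma uniform_approx_Max_local:
  fixes G :: "('a \<Rightarrow> real) set"
  assumes G: "finite G" "\<And>f. f \<in> G \<Longrightarrow> bounded (range f)" and "\<delta> > 0"
    and c: "\<And>a. c a \<in> A" "\<And>a y. c a y \<le> h y"
    and c_near: "\<And>a y. \<forall>f\<in>G. \<bar>f y - f a\<bar> < \<delta> \<Longrightarrow> h y - e < c a y"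
  obtains g where "g \<in> A" "\<And>y. \<bar>h y - g y\<bar> \<le> e"
proof -
  obtain R where "finite R" and R: "\<And>y. \<exists>r\<in>R. \<forall>f\<in>G. \<bar>f y - f r\<bar> < \<delta>"
    using finite_cover_bounded[OF G \<open>\<delta> > 0\<close>] by blast
  then have "R \<noteq> {}"
    by blast
  define g where "g y = Max ((\<lambda>f. f y) ` c ` R)" for y
  have "g \<in> A"
    unfolding g_def using \<open>finite R\<close> \<open>R \<noteq> {}\<close> c(1) by (intro Max_in) auto
  moreover have "\<bar>h y - g y\<bar> \<le> e" for y
  proof -
    have "g y \<le> h y"
      unfolding g_def using \<open>finite R\<close> \<open>R \<noteq> {}\<close> c(2) by simp
    moreover obtain r where "r \<in> R" "h y - e < c r y"
      using R c_near by blast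
    moreover have "c r y \<le> g y"
      unfolding g_def using \<open>finite R\<close> \<open>r \<in> R\<close> by (intro Max_ge) auto
    ultimately show ?thesis
      by linarith
  qed
  ultimately show thesis
    by (rule that)
qed

lemma uniform_approx:
  assumes bdd: "\<And>f. f \<in> A \<Longrightarrow> bounded (range f)"
    and h: "unif_cont (gen_unif A) eucl_unif h" and "e > 0"
  obtains g where "g \<in> A" "\<And>y. \<bar>h y - g y\<bar> \<le> e"
proof -
  obtain H where H: "\<And>y. \<bar>h y\<bar> \<le> H"
    using bounded_if_unif_cont_gen_unif[OF bdd h] by blast
  then have "H \<ge> 0"
    using H[of undefined] by linarith
  have "e / 3 > 0"
    using \<open>e > 0\<close> by simp
  obtain G \<delta> where G: "finite G" "G \<subseteq> A" "\<delta> > 0"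
    and close: "\<And>a b. \<forall>f\<in>G. \<bar>f a - f b\<bar> < \<delta> \<Longrightarrow> \<bar>h a - h b\<bar> < e / 3"
    using unif_cont_gen_unifD[OF h \<open>e / 3 > 0\<close>] by blast
  define M where "M = 2 * H / \<delta>"
  have "M \<ge> 0" "2 * H \<le> M * \<delta>"
    using \<open>H \<ge> 0\<close> \<open>\<delta> > 0\<close> by (simp_all add: M_def)
  define \<delta>' where "\<delta>' = min \<delta> (e / 3 / (M + 1))"
  have "0 < \<delta>'" "\<delta>' \<le> \<delta>"
    using \<open>\<delta> > 0\<close> \<open>e > 0\<close> \<open>M \<ge> 0\<close> by (simp_all add: \<delta>'_def)
  have "M * \<delta>' \<le> M * (e / 3 / (M + 1))"
    using \<open>M \<ge> 0\<close> by (intro mult_left_mono) (simp_all add: \<delta>'_def)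
  also have "\<dots> < e / 3"
    using \<open>M \<ge> 0\<close> \<open>e > 0\<close> by (simp add: field_simps)
  finally have "M * \<delta>' < e / 3" .
  have "\<exists>g\<in>A. (\<forall>y. g y \<le> h y) \<and> (\<forall>y. (\<forall>f\<in>G. \<bar>f y - f a\<bar> < \<delta>') \<longrightarrow> h y - e < g y)" for a
  proof -
    obtain g where "g \<in> A" "\<And>y. g y \<le> h y" and near:
      "\<And>y t. 0 < t \<Longrightarrow> t \<le> \<delta> \<Longrightarrow> \<forall>f\<in>G. \<bar>f y - f a\<bar> < t \<Longrightarrow> h y - 2 * (e / 3) - M * t < g y"
      using lower_bump[where h = h and a = a, OF H G(1,2) \<open>e / 3 > 0\<close> close \<open>M \<ge> 0\<close> \<open>2 * H \<le> M * \<delta>\<close>]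
      by blast
    moreover have "h y - e < g y" if "\<forall>f\<in>G. \<bar>f y - f a\<bar> < \<delta>'" for y
      using near[OF \<open>0 < \<delta>'\<close> \<open>\<delta>' \<le> \<delta>\<close> that] \<open>M * \<delta>' < e / 3\<close> by linarith
    ultimately show ?thesis
      by blast
  qed
  then obtain c where c: "\<And>a. c a \<in> A" "\<And>a y. c a y \<le> h y"
    and c_near: "\<And>a y. \<forall>f\<in>G. \<bar>f y - f a\<bar> < \<delta>' \<Longrightarrow> h y - e < c a y"
    by metis
  have G_bdd: "\<And>f. f \<in> G \<Longrightarrow> bounded (range f)"
    using bdd G(2) by blast
  show thesis
    using uniform_approx_Max_local[where c = c and h = h and e = e, OF G(1) G_bdd \<open>0 < \<delta>'\<close> c c_near] that
    by blast
qed

lemma uniform_limit_in: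
  assumes bdd: "\<And>f. f \<in> A \<Longrightarrow> bounded (range f)"
    and h: "unif_cont (gen_unif A) eucl_unif h"
  obtains g where "\<And>n. g n \<in> A" "uniform_limit UNIV g h sequentially"
proof -
  have "\<forall>n. \<exists>g\<in>A. \<forall>y. \<bar>h y - g y\<bar> \<le> inverse (real (Suc n))"
    by (metis uniform_approx[OF bdd h] inverse_positive_iff_positive of_nat_0_less_iff zero_less_Suc)
  then obtain g where gA: "\<And>n. g n \<in> A" and g: "\<And>n y. \<bar>h y - g n y\<bar> \<le> inverse (real (Suc n))"
    by metis
  have "uniform_limit UNIV g h sequentially"
    unfolding uniform_limit_iff
  proof (intro allI impI)
    fix e :: real assume "e > 0"
    then obtain N where N: "inverse (real (Suc N)) < e"
      using reals_Archimedean by blast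
    have "\<bar>g n y - h y\<bar> < e" if "N \<le> n" for n y
    proof -
      have "inverse (real (Suc n)) \<le> inverse (real (Suc N))"
        using that by (simp add: le_imp_inverse_le)
      then have "\<bar>h y - g n y\<bar> < e"
        using g[of y n] N by linarith
      then show ?thesis
        by (simp add: abs_minus_commute)
    qed
    then show "\<forall>\<^sub>F n in sequentially. \<forall>y\<in>UNIV. dist (g n y) (h y) < e"
      unfolding eventually_sequentially dist_real_def by blast
  qed
  with gA show thesis
    by (rule that)
qed

end

section \<open>Uniform continuity of the formula semantics\<close>

lemma unif_cont_mono: "unif_cont U V f \<Longrightarrow> U \<subseteq> U' \<Longrightarrow> unif_cont U' V f"
  unfolding unif_cont_def by blast

lemma unif_cont_const:
  assumes "is_uniformity U"
  shows "unif_cont U eucl_unif (\<lambda>_. c)"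
  unfolding unif_cont_eucl_iff[OF assms] using uniformity_UNIV[OF assms] by simp

lemma unif_cont_min:
  assumes U: "is_uniformity U" and "unif_cont U eucl_unif f" "unif_cont U eucl_unif g"
  shows "unif_cont U eucl_unif (\<lambda>y. min (f y) (g y))"
  unfolding unif_cont_eucl_iff[OF U]
proof (intro allI impI)
  fix e :: real assume "e > 0"
  then have "{(a, b). \<bar>f a - f b\<bar> < e} \<inter> {(a, b). \<bar>g a - g b\<bar> < e} \<in> U"
    using assms by (simp add: unif_cont_eucl_iff uniformity_Int)
  moreover have "{(a, b). \<bar>f a - f b\<bar> < e} \<inter> {(a, b). \<bar>g a - g b\<bar> < e}
      \<subseteq> {(a, b). \<bar>min (f a) (g a) - min (f b) (g b)\<bar> < e}"
    by (auto simp: min_def abs_less_iff)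
  ultimately show "{(a, b). \<bar>min (f a) (g a) - min (f b) (g b)\<bar> < e} \<in> U"
    by (rule uniformity_mono[OF U])
qed

lemma unif_cont_plus:
  assumes "is_uniformity U" "unif_cont U eucl_unif f"
  shows "unif_cont U eucl_unif (\<lambda>y. c + f y)"
  using assms by (simp add: unif_cont_eucl_iff)

lemma unif_cont_scale:
  assumes U: "is_uniformity U" and f: "unif_cont U eucl_unif f"
  shows "unif_cont U eucl_unif (\<lambda>y. c * f y)"
  unfolding unif_cont_eucl_iff[OF U]
proof (intro allI impI)
  fix e :: real assume "e > 0"
  then have "{(a, b). \<bar>f a - f b\<bar> < e / (\<bar>c\<bar> + 1)} \<in> U"
    using f unfolding unif_cont_eucl_iff[OF U] by simp
  moreover have "{(a, b). \<bar>f a - f b\<bar> < e / (\<bar>c\<bar> + 1)} \<subseteq> {(a, b). \<bar>c * f a - c * f b\<bar> < e}"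
  proof clarify
    fix a b assume "\<bar>f a - f b\<bar> < e / (\<bar>c\<bar> + 1)"
    then have "\<bar>c\<bar> * \<bar>f a - f b\<bar> \<le> \<bar>c\<bar> * (e / (\<bar>c\<bar> + 1))"
      by (intro mult_left_mono) auto
    also have "\<dots> < e"
      using \<open>e > 0\<close> by (simp add: field_simps)
    finally show "\<bar>c * f a - c * f b\<bar> < e"
      by (simp add: abs_mult[symmetric] right_diff_distrib)
  qed
  ultimately show "{(a, b). \<bar>c * f a - c * f b\<bar> < e} \<in> U"
    by (rule uniformity_mono[OF U])
qed

lemma unif_cont_sem:
  assumes U: "is_uniformity U"
    and heart: "\<And>l \<psi>. unif_cont U eucl_unif (sem \<tau> Bm x \<psi>) \<Longrightarrow>
                      unif_cont U eucl_unif (\<tau> l \<circ> Bm (sem \<tau> Bm x \<psi>) \<circ> x)"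
  shows "unif_cont U eucl_unif (sem \<tau> Bm x \<phi>)"
  by (induction \<phi>)
     (simp_all add: heart[unfolded comp_def] unif_cont_const unif_cont_min unif_cont_plus unif_cont_scale U)

lemma bounded_range_sem:
  assumes bdd: "\<And>l k. bounded (range k) \<Longrightarrow> bounded (range (\<tau> l \<circ> Bm k))"
  shows "bounded (range (sem \<tau> Bm x \<phi>))"
proof (induction \<phi>)
  case FOne
  show ?case
    by (auto simp: bounded_real intro: exI[of _ 1])
next
  case (FMin \<phi> \<psi>)
  then obtain B C where B: "\<And>y. \<bar>sem \<tau> Bm x \<phi> y\<bar> \<le> B" and C: "\<And>y. \<bar>sem \<tau> Bm x \<psi> y\<bar> \<le> C"
    by (auto simp: bounded_real)
  have "\<bar>sem \<tau> Bm x (FMin \<phi> \<psi>) y\<bar> \<le> max B C" for y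
    using B[of y] C[of y] unfolding sem.simps by (auto simp: abs_le_iff min_def max_def)
  then show ?case
    by (auto simp: bounded_real)
next
  case (FPlus r \<phi>)
  then obtain B where B: "\<And>y. \<bar>sem \<tau> Bm x \<phi> y\<bar> \<le> B"
    by (auto simp: bounded_real)
  have "\<bar>sem \<tau> Bm x (FPlus r \<phi>) y\<bar> \<le> \<bar>r\<bar> + B" for y
    using B[of y] abs_triangle_ineq[of r "sem \<tau> Bm x \<phi> y"] unfolding sem.simps by linarith
  then show ?case
    by (auto simp: bounded_real)
next
  case (FTimes r \<phi>)
  then obtain B where "\<And>y. \<bar>sem \<tau> Bm x \<phi> y\<bar> \<le> B"
    by (auto simp: bounded_real)
  then have "\<bar>sem \<tau> Bm x (FTimes r \<phi>) y\<bar> \<le> \<bar>r\<bar> * B" for y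
    by (simp add: abs_mult mult_left_mono)
  then show ?case
    by (auto simp: bounded_real)
next
  case (FHeart l \<phi>)
  have "range (sem \<tau> Bm x (FHeart l \<phi>)) \<subseteq> range (\<tau> l \<circ> Bm (sem \<tau> Bm x \<phi>))"
    by auto
  then show ?case
    using bdd[OF FHeart] bounded_subset by blast
qed

lemma function_lattice_range_sem: "function_lattice (range (sem \<tau> Bm x))"
proof
  fix c :: real
  show "(\<lambda>_. c) \<in> range (sem \<tau> Bm x)"
    by (rule image_eqI[where x = "FTimes c FOne"]) auto
next
  fix c :: real and f assume "f \<in> range (sem \<tau> Bm x)"
  then obtain \<phi> where "f = sem \<tau> Bm x \<phi>"
    by blast
  then show "(\<lambda>y. c + f y) \<in> range (sem \<tau> Bm x)" "(\<lambda>y. c * f y) \<in> range (sem \<tau> Bm x)"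
    by (auto intro: image_eqI[where x = "FPlus c \<phi>"] image_eqI[where x = "FTimes c \<phi>"])
next
  fix f g assume "f \<in> range (sem \<tau> Bm x)" "g \<in> range (sem \<tau> Bm x)"
  then obtain \<phi> \<psi> where "f = sem \<tau> Bm x \<phi>" "g = sem \<tau> Bm x \<psi>"
    by blast
  then show "(\<lambda>y. min (f y) (g y)) \<in> range (sem \<tau> Bm x)"
    by (intro image_eqI[where x = "FMin \<phi> \<psi>"]) auto
qed

lemma logical_unif_eq_gen_unif: "logical_unif \<tau> Bm x = gen_unif (range (sem \<tau> Bm x))"
  by (simp add: logical_unif_def initial_unif_eq_gen_unif)

lemma unif_cont_heart_logical_unif:
  fixes \<tau> :: "'l \<Rightarrow> 'br \<Rightarrow> real" and Bm :: "('x \<Rightarrow> real) \<Rightarrow> 'bx \<Rightarrow> 'br"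
  assumes bdd: "\<And>l k. bounded (range k) \<Longrightarrow> bounded (range (\<tau> l \<circ> Bm k))"
    and ulim: "\<And>l (k :: nat \<Rightarrow> 'x \<Rightarrow> real) h. uniform_limit UNIV k h sequentially \<Longrightarrow>
                 uniform_limit UNIV (\<lambda>i. \<tau> l \<circ> Bm (k i)) (\<tau> l \<circ> Bm h) sequentially"
    and h: "unif_cont (logical_unif \<tau> Bm x) eucl_unif h"
  shows "unif_cont (logical_unif \<tau> Bm x) eucl_unif (\<tau> l \<circ> Bm h \<circ> x)"
proof -
  have "\<And>f. f \<in> range (sem \<tau> Bm x) \<Longrightarrow> bounded (range f)"
    using bounded_range_sem[OF bdd] by (auto simp: image_iff)
  then obtain g where "\<And>n. g n \<in> range (sem \<tau> Bm x)" and lim: "uniform_limit UNIV g h sequentially"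
    using function_lattice.uniform_limit_in[OF function_lattice_range_sem] h
    unfolding logical_unif_eq_gen_unif by blast
  then have "\<forall>n. \<exists>\<phi>. g n = sem \<tau> Bm x \<phi>"
    by blast
  then obtain \<phi> where \<phi>: "\<And>n. g n = sem \<tau> Bm x (\<phi> n)"
    by metis
  have heart_eq: "(\<lambda>n y. (\<tau> l \<circ> Bm (g n)) (x y)) = (\<lambda>n. sem \<tau> Bm x (FHeart l (\<phi> n)))"
    "(\<lambda>y. (\<tau> l \<circ> Bm h) (x y)) = \<tau> l \<circ> Bm h \<circ> x"
    by (simp_all add: \<phi> fun_eq_iff)
  have "uniform_limit UNIV (\<lambda>n y. (\<tau> l \<circ> Bm (g n)) (x y)) (\<lambda>y. (\<tau> l \<circ> Bm h) (x y)) sequentially"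
    by (rule uniform_limit_compose'[OF ulim[OF lim], where h = x]) simp
  then have "uniform_limit UNIV (\<lambda>n. sem \<tau> Bm x (FHeart l (\<phi> n))) (\<tau> l \<circ> Bm h \<circ> x) sequentially"
    unfolding heart_eq .
  then show ?thesis
    unfolding logical_unif_eq_gen_unif
    by (rule unif_cont_uniform_limit[OF is_uniformity_gen_unif, rotated]) (rule unif_cont_gen_unif, rule rangeI)
qed

section \<open>The bisimulation uniformity\<close>

lemma Phi_eq_gen_unif: "Phi \<tau> Bm x U = gen_unif {\<tau> l \<circ> Bm h \<circ> x | l h. unif_cont U eucl_unif h}"
  by (simp add: Phi_def initial_unif_eq_gen_unif)

lemma gen_unif_mono: "F \<subseteq> F' \<Longrightarrow> gen_unif F \<subseteq> gen_unif F'"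
  unfolding gen_unif_def by blast

lemma Phi_mono: "U \<subseteq> U' \<Longrightarrow> Phi \<tau> Bm x U \<subseteq> Phi \<tau> Bm x U'"
  unfolding Phi_eq_gen_unif by (rule gen_unif_mono) (blast intro: unif_cont_mono)

lemma logical_unif_subset_if_Phi_subset:
  assumes U: "is_uniformity U" and "Phi \<tau> Bm x U \<subseteq> U"
  shows "logical_unif \<tau> Bm x \<subseteq> U"
  unfolding logical_unif_eq_gen_unif
proof (rule gen_unif_least[OF U], clarify)
  fix \<phi>
  show "unif_cont U eucl_unif (sem \<tau> Bm x \<phi>)"
  proof (rule unif_cont_sem[OF U])
    fix l \<psi> assume "unif_cont U eucl_unif (sem \<tau> Bm x \<psi>)"
    then have "\<tau> l \<circ> Bm (sem \<tau> Bm x \<psi>) \<circ> x \<in> {\<tau> l \<circ> Bm h \<circ> x | l h. unif_cont U eucl_unif h}"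
      by blast
    then have "unif_cont (Phi \<tau> Bm x U) eucl_unif (\<tau> l \<circ> Bm (sem \<tau> Bm x \<psi>) \<circ> x)"
      unfolding Phi_eq_gen_unif by (rule unif_cont_gen_unif)
    then show "unif_cont U eucl_unif (\<tau> l \<circ> Bm (sem \<tau> Bm x \<psi>) \<circ> x)"
      using \<open>Phi \<tau> Bm x U \<subseteq> U\<close> by (rule unif_cont_mono)
  qed
qed

lemma Phi_logical_unif:
  fixes \<tau> :: "'l \<Rightarrow> 'br \<Rightarrow> real" and Bm :: "('x \<Rightarrow> real) \<Rightarrow> 'bx \<Rightarrow> 'br"
  assumes bdd: "\<And>l k. bounded (range k) \<Longrightarrow> bounded (range (\<tau> l \<circ> Bm k))"
    and ulim: "\<And>l (k :: nat \<Rightarrow> 'x \<Rightarrow> real) h. uniform_limit UNIV k h sequentially \<Longrightarrow>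
                 uniform_limit UNIV (\<lambda>i. \<tau> l \<circ> Bm (k i)) (\<tau> l \<circ> Bm h) sequentially"
  shows "Phi \<tau> Bm x (logical_unif \<tau> Bm x) = logical_unif \<tau> Bm x"
proof
  show "Phi \<tau> Bm x (logical_unif \<tau> Bm x) \<subseteq> logical_unif \<tau> Bm x"
    unfolding Phi_eq_gen_unif
    by (rule gen_unif_least)
       (auto simp: logical_unif_eq_gen_unif is_uniformity_gen_unif
             intro: unif_cont_heart_logical_unif[OF bdd ulim, unfolded logical_unif_eq_gen_unif])
  then show "logical_unif \<tau> Bm x \<subseteq> Phi \<tau> Bm x (logical_unif \<tau> Bm x)"
    by (intro logical_unif_subset_if_Phi_subset Phi_mono)
       (simp_all add: Phi_eq_gen_unif is_uniformity_gen_unif)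
qed

lemma bisim_unif_eqI:
  assumes "is_uniformity U" "Phi \<tau> Bm x U = U"
    and "\<And>V. is_uniformity V \<Longrightarrow> Phi \<tau> Bm x V = V \<Longrightarrow> U \<subseteq> V"
  shows "bisim_unif \<tau> Bm x = U"
  unfolding bisim_unif_def
proof (rule the_equality)
  fix U' assume "is_uniformity U' \<and> Phi \<tau> Bm x U' = U' \<and>
    (\<forall>V. is_uniformity V \<and> Phi \<tau> Bm x V = V \<longrightarrow> U' \<subseteq> V)"
  with assms show "U' = U"
    by (simp add: subset_antisym)
qed (simp add: assms)

theorem mainTheorem13:
  fixes \<tau> :: "'l \<Rightarrow> 'br \<Rightarrow> real"
    and BXR :: "('x \<Rightarrow> real) \<Rightarrow> 'bx \<Rightarrow> 'br"
    and BRR :: "(real \<Rightarrow> real) \<Rightarrow> 'br \<Rightarrow> 'br"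
    and BXX :: "('x \<Rightarrow> 'x) \<Rightarrow> 'bx \<Rightarrow> 'bx"
    and BRX :: "(real \<Rightarrow> 'x) \<Rightarrow> 'br \<Rightarrow> 'bx"
    and x :: "'x \<Rightarrow> 'bx"
  assumes id_X: "BXX id = id" and id_R: "BRR id = id"
    and comp_XXX: "\<And>f g. BXX (g \<circ> f) = BXX g \<circ> BXX f"
    and comp_XXR: "\<And>f g. BXR (g \<circ> f) = BXR g \<circ> BXX f"
    and comp_XRX: "\<And>f g. BXX (g \<circ> f) = BRX g \<circ> BXR f"
    and comp_XRR: "\<And>f g. BXR (g \<circ> f) = BRR g \<circ> BXR f"
    and comp_RXX: "\<And>f g. BRX (g \<circ> f) = BXX g \<circ> BRX f"
    and comp_RXR: "\<And>f g. BRR (g \<circ> f) = BXR g \<circ> BRX f"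
    and comp_RRX: "\<And>f g. BRX (g \<circ> f) = BRX g \<circ> BRR f"
    and comp_RRR: "\<And>f g. BRR (g \<circ> f) = BRR g \<circ> BRR f"
    and bdd_X: "\<And>l (k :: 'x \<Rightarrow> real). bounded (range k) \<Longrightarrow> bounded (range (\<tau> l \<circ> BXR k))"
    and bdd_R: "\<And>l (k :: real \<Rightarrow> real). bounded (range k) \<Longrightarrow> bounded (range (\<tau> l \<circ> BRR k))"
    and ulim_X: "\<And>l (k :: nat \<Rightarrow> 'x \<Rightarrow> real) h. uniform_limit UNIV k h sequentially \<Longrightarrow>
                   uniform_limit UNIV (\<lambda>i. \<tau> l \<circ> BXR (k i)) (\<tau> l \<circ> BXR h) sequentially"
    and ulim_R: "\<And>l (k :: nat \<Rightarrow> real \<Rightarrow> real) h. uniform_limit UNIV k h sequentially \<Longrightarrow>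
                   uniform_limit UNIV (\<lambda>i. \<tau> l \<circ> BRR (k i)) (\<tau> l \<circ> BRR h) sequentially"
  shows "bisim_unif \<tau> BXR x = logical_unif \<tau> BXR x"
proof (rule bisim_unif_eqI)
  \<comment> \<open>Only conditions (1) and (2) for \<open>Y = X\<close> are needed.\<close>
  show "is_uniformity (logical_unif \<tau> BXR x)"
    by (simp add: logical_unif_eq_gen_unif is_uniformity_gen_unif)
  show "Phi \<tau> BXR x (logical_unif \<tau> BXR x) = logical_unif \<tau> BXR x"
    using bdd_X ulim_X by (rule Phi_logical_unif)
  show "logical_unif \<tau> BXR x \<subseteq> V" if "is_uniformity V" "Phi \<tau> BXR x V = V" for V
    using that by (simp add: logical_unif_subset_if_Phi_subset)
qed

end
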